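(* Let $k\ge1$, let $G$ and $H$ be simple graphs on at most $n$ vertices, and let $f_k(n)=2k\cdot4^{n^{2k}}$. Then $\hom(F,G)=\hom(F,H)$ for every underlying graph $F$ of a member of $\mathcal P_k$ if and only if $\hom(F,G)=\hom(F,H)$ for every underlying graph $F$ of a member of $\mathcal P_k$ having at most $f_k(n)$ vertices.
   Context: $\hom(F,G)$ is the number of homomorphisms $F\to G$. A $(k,k)$-bilabelled graph is $\boldsymbol F=(F,\boldsymbol u,\boldsymbol v)$, $\boldsymbol u,\boldsymbol v\in V(F)^k$, with underlying graph $F$. Series composition $\boldsymbol F\cdot\boldsymbol F'$: disjoint union with $v_i$ identified with $u'_i$, multiple edges removed, labels $(\boldsymbol u,\boldsymbol v')$. Parallel composition $\boldsymbol F\odot\boldsymbol F'$: identify $u_i$ with $u'_i$, $v_i$ with $v'_i$, multiple edges removed. For $\sigma\in\mathfrak S_{2k}$, $\boldsymbol F^\sigma$ has in-labels $(w_{\sigma(1)},\dots,w_{\sigma(k)})$, out-labels $(w_{\sigma(k+1)},\dots,w_{\sigma(2k)})$, $\boldsymbol w=\boldsymbol u\boldsymbol v$. $\mathscr C_k$ = cyclic group of rotations of $(1,\dots,k,2k,\dots,k+1)$. Bilabelled minors: via edge contraction, edge deletion, deletion of unlabelled vertices. $\boldsymbol C_k$: vertices $[2k]$, in-labels $(1,\dots,k)$, out-labels $(k+1,\dots,2k)$, edges $\{i,i+1\}$ ($i\in[2k]\setminus\{k,2k\}$), $\{1,k+1\},\{k,2k\}$; $\boldsymbol M_k$: same vertices/labels,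 edges $\{i,i+k\}$. $\mathcal Q_k^P,\mathcal Q_k^S$ = bilabelled minors of $\boldsymbol C_k,\boldsymbol M_k$; $\mathcal Q_k$ their union. $\mathcal P_k$ = smallest class containing $\mathcal Q_k$, closed under series composition, $\boldsymbol F\mapsto\boldsymbol F\odot\boldsymbol Q$ ($\boldsymbol Q\in\mathcal Q_k^P$), and $\boldsymbol F\mapsto\boldsymbol F^\sigma$ ($\sigma\in\mathscr C_k$). *)

theory Defs
  imports "HOL-Library.FuncSet"
begin

text \<open>A graph: vertex set and edge set; an edge is a set of one (loop) or two vertices.\<close>
record 'a sgraph =
  gverts :: "'a set"
  gedges :: "'a set set"

definition simple_graph :: "'a sgraph \<Rightarrow> bool" where
  "simple_graph G \<longleftrightarrow> finite (gverts G) \<and>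
     (\<forall>e\<in>gedges G. e \<subseteq> gverts G \<and> card e = 2)"

definition hom :: "'b sgraph \<Rightarrow> 'a sgraph \<Rightarrow> nat" where
  "hom F G = card {h \<in> gverts F \<rightarrow>\<^sub>E gverts G. \<forall>e\<in>gedges F. h ` e \<in> gedges G}"

record bgraph =
  bverts :: "nat set"
  bedges :: "nat set set"
  inl :: "nat list"
  outl :: "nat list"

definition ug :: "bgraph \<Rightarrow> nat sgraph" where
  "ug F = \<lparr>gverts = bverts F, gedges = bedges F\<rparr>"

definition bmap :: "(nat \<Rightarrow> nat) \<Rightarrow> bgraph \<Rightarrow> bgraph" where
  "bmap q F = \<lparr>bverts = q ` bverts F, bedges = (\<lambda>e. q ` e) ` bedges F,
               inl = map q (inl F), outl = map q (outl F)\<rparr>"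

text \<open>Identify vertices according to the equivalence relation generated by the pairs P;
  every vertex is sent to the least element of its class (multiple edges disappear
  since edges form a set).\<close>
definition glue :: "(nat \<times> nat) set \<Rightarrow> bgraph \<Rightarrow> bgraph" where
  "glue P F = bmap (\<lambda>x. Min {y. (x, y) \<in> (P \<union> P\<inverse>)\<^sup>*}) F"

definition ev :: "nat \<Rightarrow> nat" where "ev x = 2 * x"
definition od :: "nat \<Rightarrow> nat" where "od x = 2 * x + 1"

definition series :: "bgraph \<Rightarrow> bgraph \<Rightarrow> bgraph" where
  "series F F' = glue (set (zip (map ev (outl F)) (map od (inl F'))))
     \<lparr>bverts = ev ` bverts F \<union> od ` bverts F',
      bedges = (\<lambda>e. ev ` e) ` bedges F \<union> (\<lambda>e. od ` e) ` bedges F',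
      inl = map ev (inl F), outl = map od (outl F')\<rparr>"

definition parallel :: "bgraph \<Rightarrow> bgraph \<Rightarrow> bgraph" where
  "parallel F F' = glue (set (zip (map ev (inl F)) (map od (inl F'))) \<union>
                         set (zip (map ev (outl F)) (map od (outl F'))))
     \<lparr>bverts = ev ` bverts F \<union> od ` bverts F',
      bedges = (\<lambda>e. ev ` e) ` bedges F \<union> (\<lambda>e. od ` e) ` bedges F',
      inl = map ev (inl F), outl = map ev (outl F)\<rparr>"

text \<open>Relabelling by a permutation sigma of the 2k label positions (0-based):
  with w = u v, in-labels become (w_sigma(0),...,w_sigma(k-1)) and out-labels
  (w_sigma(k),...,w_sigma(2k-1)).\<close>
definition perm_labels :: "nat \<Rightarrow> (nat \<Rightarrow> nat) \<Rightarrow> bgraph \<Rightarrow> bgraph" where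
  "perm_labels k \<sigma> F = (let w = inl F @ outl F in
     F\<lparr>inl := map (\<lambda>i. w ! \<sigma> i) [0..<k], outl := map (\<lambda>i. w ! \<sigma> i) [k..<2*k]\<rparr>)"

text \<open>The cyclic order (1,...,k,2k,...,k+1) in 0-based form: cyc k = [0..k-1, 2k-1, ..., k];
  position of label index i in it; rotation by r steps.\<close>
definition cyc :: "nat \<Rightarrow> nat list" where
  "cyc k = [0..<k] @ rev [k..<2*k]"

definition cyc_pos :: "nat \<Rightarrow> nat \<Rightarrow> nat" where
  "cyc_pos k i = (if i < k then i else 3 * k - 1 - i)"

definition rot :: "nat \<Rightarrow> nat \<Rightarrow> nat \<Rightarrow> nat" where
  "rot k r i = cyc k ! ((cyc_pos k i + r) mod (2 * k))"

definition Ck_group :: "nat \<Rightarrow> (nat \<Rightarrow> nat) set" where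
  "Ck_group k = {rot k r | r. r < 2 * k}"

inductive minor_step :: "bgraph \<Rightarrow> bgraph \<Rightarrow> bool" where
  edge_del: "e \<in> bedges F \<Longrightarrow> minor_step F (F\<lparr>bedges := bedges F - {e}\<rparr>)"
| edge_contr: "{a, b} \<in> bedges F \<Longrightarrow> a \<noteq> b \<Longrightarrow>
     minor_step F (bmap (\<lambda>x. if x = b then a else x) (F\<lparr>bedges := bedges F - {{a, b}}\<rparr>))"
| vert_del: "x \<in> bverts F \<Longrightarrow> x \<notin> set (inl F) \<Longrightarrow> x \<notin> set (outl F) \<Longrightarrow>
     minor_step F (F\<lparr>bverts := bverts F - {x}, bedges := {e \<in> bedges F. x \<notin> e}\<rparr>)"

definition bminor :: "bgraph \<Rightarrow> bgraph \<Rightarrow> bool" where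
  "bminor F M \<longleftrightarrow> minor_step\<^sup>*\<^sup>* M F"

definition Ck :: "nat \<Rightarrow> bgraph" where
  "Ck k = \<lparr>bverts = {1..2*k},
           bedges = {{i, i+1} | i. i \<in> {1..2*k} - {k, 2*k}} \<union> {{1, k+1}, {k, 2*k}},
           inl = [1..<k+1], outl = [k+1..<2*k+1]\<rparr>"

definition Mk :: "nat \<Rightarrow> bgraph" where
  "Mk k = \<lparr>bverts = {1..2*k},
           bedges = {{i, i+k} | i. i \<in> {1..k}},
           inl = [1..<k+1], outl = [k+1..<2*k+1]\<rparr>"

definition QP :: "nat \<Rightarrow> bgraph set" where
  "QP k = {F. bminor F (Ck k)}"

definition QS :: "nat \<Rightarrow> bgraph set" where
  "QS k = {F. bminor F (Mk k)}"

definition Q :: "nat \<Rightarrow> bgraph set" where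
  "Q k = QP k \<union> QS k"

inductive_set P :: "nat \<Rightarrow> bgraph set" for k :: nat where
  base: "F \<in> Q k \<Longrightarrow> F \<in> P k"
| ser: "F \<in> P k \<Longrightarrow> F' \<in> P k \<Longrightarrow> series F F' \<in> P k"
| par: "F \<in> P k \<Longrightarrow> R \<in> QP k \<Longrightarrow> parallel F R \<in> P k"
| perm: "F \<in> P k \<Longrightarrow> \<sigma> \<in> Ck_group k \<Longrightarrow> perm_labels k \<sigma> F \<in> P k"

definition fk :: "nat \<Rightarrow> nat \<Rightarrow> nat" where
  "fk k n = 2 * k * 4 ^ (n ^ (2 * k))"

end

theory Submission
  imports Defs "HOL-Library.Function_Algebras" Complex_Main
begin

text \<open>
  For a bilabelled graph F with k in- and k out-labels, record the numbers of homomorphisms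
  F -> G and F -> H that send the label tuple to a given x in V(G)^2k resp. y in V(H)^2k, as
  one vector indexed by V(G)^2k + V(H)^2k.  Series composition, parallel composition with a
  fixed member of Q_k^P and the rotations in C_k act on these vectors by bilinear resp. linear
  maps, and hom(F,G) - hom(F,H) is a linear functional of the vector.  The spans S_d of the
  vectors of the members of P_k built in at most d rounds of operations increase inside a space
  of dimension at most 2 n^2k, so S_(D+1) = S_D for some D <= 2 n^2k.  Then S_D is closed under
  all operations and hence contains the vector of every member of P_k, while members built in D
  rounds have at most 2k 2^D <= f_k(n) vertices: if the functional vanishes on those, it
  vanishes on all of P_k.
\<close>

lemma card_filter_eq_sum_fibres:
  assumes "finite A" "f ` A \<subseteq> T" "finite T"
  shows "card {a\<in>A. p (f a)} = (\<Sum>t\<in>T. if p t then card {a\<in>A. f a = t} else 0)"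
proof -
  have "{a\<in>A. p (f a)} = (\<Union>t\<in>{t\<in>T. p t}. {a\<in>A. f a = t})" using assms by auto
  then have "card {a\<in>A. p (f a)} = (\<Sum>t\<in>{t\<in>T. p t}. card {a\<in>A. f a = t})"
    using assms by (simp only:) (rule card_UN_disjoint, auto)
  also have "\<dots> = (\<Sum>t\<in>T. if p t then card {a\<in>A. f a = t} else 0)"
    using assms by (simp add: sum.inter_filter)
  finally show ?thesis .
qed

lemma card_filter_product_eq_sum_fibres:
  assumes "finite A1" "finite A2" "f1 ` A1 \<subseteq> T1" "f2 ` A2 \<subseteq> T2" "finite T1" "finite T2"
  shows "card {p\<in>A1 \<times> A2. R (f1 (fst p)) (f2 (snd p))} =
    (\<Sum>t1\<in>T1. \<Sum>t2\<in>T2. if R t1 t2 then card {a\<in>A1. f1 a = t1} * card {b\<in>A2. f2 b = t2} else 0)"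
proof -
  let ?f = "\<lambda>p. (f1 (fst p), f2 (snd p))"
  have "card {p\<in>A1 \<times> A2. case_prod R (?f p)} =
     (\<Sum>t\<in>T1\<times>T2. if case_prod R t then card {p\<in>A1\<times>A2. ?f p = t} else 0)"
    by (rule card_filter_eq_sum_fibres) (use assms in auto)
  also have "\<dots> = (\<Sum>t\<in>T1\<times>T2.
      if case_prod R t then card {a\<in>A1. f1 a = fst t} * card {b\<in>A2. f2 b = snd t} else 0)"
  proof (rule sum.cong)
    fix t
    have "{p\<in>A1\<times>A2. ?f p = t} = {a\<in>A1. f1 a = fst t} \<times> {b\<in>A2. f2 b = snd t}"
      by (cases t) auto
    then show "(if case_prod R t then card {p\<in>A1\<times>A2. ?f p = t} else 0) =
       (if case_prod R t then card {a\<in>A1. f1 a = fst t} * card {b\<in>A2. f2 b = snd t} else 0)"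
      by (simp add: card_cartesian_product)
  qed simp
  also have "\<dots> = (\<Sum>t1\<in>T1. \<Sum>t2\<in>T2.
      if R t1 t2 then card {a\<in>A1. f1 a = t1} * card {b\<in>A2. f2 b = t2} else 0)"
    by (subst sum.cartesian_product) (rule sum.cong, auto)
  finally show ?thesis by simp
qed

lemma card_filter_bij_betw:
  assumes "bij_betw \<Phi> A B"
  shows "card {a\<in>A. C (\<Phi> a)} = card {b\<in>B. C b}"
proof -
  have "{b\<in>B. C b} = \<Phi> ` {a\<in>A. C (\<Phi> a)}" using assms by (auto simp: bij_betw_def)
  moreover have "inj_on \<Phi> {a\<in>A. C (\<Phi> a)}"
    using assms by (auto simp: bij_betw_def intro: inj_on_subset)
  ultimately show ?thesis by (simp add: card_image)
qed

lemma ball_set_zip_iff_map_eq: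
  "length xs = length ys \<Longrightarrow> (\<forall>(a, b)\<in>set (zip xs ys). f a = g b) \<longleftrightarrow> map f xs = map g ys"
  by (induction xs ys rule: list_induct2) auto

section \<open>Homomorphisms refined by label images\<close>

definition homs :: "'a sgraph \<Rightarrow> bgraph \<Rightarrow> (nat \<Rightarrow> 'a) set" where
  "homs G F = {h \<in> bverts F \<rightarrow>\<^sub>E gverts G. \<forall>e\<in>bedges F. h ` e \<in> gedges G}"

definition labels :: "bgraph \<Rightarrow> nat list" where
  "labels F = inl F @ outl F"

definition hom_lab :: "'a sgraph \<Rightarrow> bgraph \<Rightarrow> 'a list \<Rightarrow> nat" where
  "hom_lab G F x = card {h \<in> homs G F. map h (labels F) = x}"

definition tuples :: "nat \<Rightarrow> 'a sgraph \<Rightarrow> 'a list set" where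
  "tuples k G = {x. set x \<subseteq> gverts G \<and> length x = 2 * k}"

definition wf_bgraph :: "nat \<Rightarrow> bgraph \<Rightarrow> bool" where
  "wf_bgraph k F \<longleftrightarrow> finite (bverts F) \<and> (\<forall>e\<in>bedges F. e \<subseteq> bverts F) \<and>
     length (inl F) = k \<and> length (outl F) = k \<and> set (labels F) \<subseteq> bverts F"

lemma finite_homs: "finite (bverts F) \<Longrightarrow> finite (gverts G) \<Longrightarrow> finite (homs G F)"
  unfolding homs_def by (rule finite_subset[OF _ finite_PiE]) auto

lemma finite_tuples: "finite (gverts G) \<Longrightarrow> finite (tuples k G)"
  unfolding tuples_def by (rule finite_lists_length_eq)

lemma card_tuples: "finite (gverts G) \<Longrightarrow> card (tuples k G) = card (gverts G) ^ (2 * k)"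
  unfolding tuples_def by (rule card_lists_length_eq)

lemma map_labels_in_tuples: "h \<in> homs G F \<Longrightarrow> wf_bgraph k F \<Longrightarrow> map h (labels F) \<in> tuples k G"
  by (auto simp: homs_def tuples_def wf_bgraph_def labels_def PiE_def Pi_def)

lemma hom_lab_eq_0:
  assumes "wf_bgraph k F" "x \<notin> tuples k G"
  shows "hom_lab G F x = 0"
proof -
  have "{h \<in> homs G F. map h (labels F) = x} = {}"
    using assms map_labels_in_tuples by blast
  then show ?thesis unfolding hom_lab_def by (metis card.empty)
qed

lemma card_homs_filter_labels:
  assumes "wf_bgraph k F" "finite (gverts G)"
  shows "card {h\<in>homs G F. p (map h (labels F))} =
    (\<Sum>x\<in>tuples k G. if p x then hom_lab G F x else 0)"
  unfolding hom_lab_def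
  by (rule card_filter_eq_sum_fibres)
    (use assms in \<open>auto simp: finite_homs wf_bgraph_def finite_tuples intro: map_labels_in_tuples\<close>)

lemma card_homs_product_filter_labels:
  assumes "wf_bgraph k F" "wf_bgraph k F'" "finite (gverts G)"
  shows "card {p\<in>homs G F \<times> homs G F'. R (map (fst p) (labels F)) (map (snd p) (labels F'))} =
    (\<Sum>x1\<in>tuples k G. \<Sum>x2\<in>tuples k G. if R x1 x2 then hom_lab G F x1 * hom_lab G F' x2 else 0)"
  unfolding hom_lab_def
  by (rule card_filter_product_eq_sum_fibres)
    (use assms in \<open>auto simp: finite_homs wf_bgraph_def finite_tuples intro: map_labels_in_tuples\<close>)

lemma hom_eq_sum_hom_lab:
  assumes "wf_bgraph k F" "finite (gverts G)"
  shows "hom (ug F) G = (\<Sum>x\<in>tuples k G. hom_lab G F x)"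
  using card_homs_filter_labels[OF assms, of "\<lambda>_. True"]
  by (simp add: hom_def ug_def homs_def)

lemma restrict_comp_in_homs:
  assumes "h \<in> homs G F'" and "\<phi> ` bverts F \<subseteq> bverts F'" and "\<forall>e\<in>bedges F. \<phi> ` e \<in> bedges F'"
    and "\<forall>e\<in>bedges F. e \<subseteq> bverts F"
  shows "restrict (h \<circ> \<phi>) (bverts F) \<in> homs G F"
  unfolding homs_def
proof (intro CollectI conjI ballI)
  have "h \<in> bverts F' \<rightarrow>\<^sub>E gverts G" using assms(1) unfolding homs_def by blast
  then show "restrict (h \<circ> \<phi>) (bverts F) \<in> bverts F \<rightarrow>\<^sub>E gverts G"
    unfolding restrict_PiE_iff comp_def using assms(2) by (blast intro: PiE_mem)
  fix e assume e: "e \<in> bedges F"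
  have "restrict (h \<circ> \<phi>) (bverts F) ` e = h ` \<phi> ` e"
    unfolding image_comp using assms(4) e by (intro image_cong) auto
  moreover have "h ` \<phi> ` e \<in> gedges G"
    using assms(1,3) e unfolding homs_def by blast
  ultimately show "restrict (h \<circ> \<phi>) (bverts F) ` e \<in> gedges G" by simp
qed

lemma bmap_simps [simp]:
  "bverts (bmap q F) = q ` bverts F" "bedges (bmap q F) = (\<lambda>e. q ` e) ` bedges F"
  "inl (bmap q F) = map q (inl F)" "outl (bmap q F) = map q (outl F)"
  by (simp_all add: bmap_def)

lemma labels_bmap [simp]: "labels (bmap q F) = map q (labels F)"
  by (simp add: labels_def)

lemma inj_on_restrict_comp_bmap:
  "inj_on (\<lambda>h'. restrict (h' \<circ> q) (bverts F)) (homs G (bmap q F))"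
proof (rule inj_onI)
  fix h1 h2
  assume h: "h1 \<in> homs G (bmap q F)" "h2 \<in> homs G (bmap q F)"
    and eq: "restrict (h1 \<circ> q) (bverts F) = restrict (h2 \<circ> q) (bverts F)"
  have "h1 (q v) = h2 (q v)" if "v \<in> bverts F" for v
    using that fun_cong[OF eq, of v] by simp
  moreover have "h1 \<in> extensional (q ` bverts F)" "h2 \<in> extensional (q ` bverts F)"
    using h unfolding homs_def PiE_def bmap_simps by blast+
  ultimately show "h1 = h2"
    by (intro extensionalityI[of _ "q ` bverts F"]) blast+
qed

lemma homs_bmap_factor:
  assumes h: "h \<in> homs G F" and compat: "\<forall>u\<in>bverts F. \<forall>v\<in>bverts F. q u = q v \<longrightarrow> h u = h v"
    and edges: "\<forall>e\<in>bedges F. e \<subseteq> bverts F"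
  obtains h' where "h' \<in> homs G (bmap q F)" "\<forall>v\<in>bverts F. h' (q v) = h v"
proof -
  define h' where "h' = restrict (\<lambda>y. h (SOME v. v \<in> bverts F \<and> q v = y)) (q ` bverts F)"
  have factor: "\<forall>v\<in>bverts F. h' (q v) = h v"
  proof
    fix v assume v: "v \<in> bverts F"
    let ?w = "SOME w. w \<in> bverts F \<and> q w = q v"
    have "?w \<in> bverts F \<and> q ?w = q v"
      by (rule someI[of _ v]) (simp add: v)
    then have "h ?w = h v" using compat v by blast
    then show "h' (q v) = h v" using v by (simp add: h'_def)
  qed
  have "h' ` q ` e = h ` e" if "e \<in> bedges F" for e
    unfolding image_comp using edges that factor by (intro image_cong) auto
  moreover have "h' \<in> q ` bverts F \<rightarrow>\<^sub>E gverts G"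
  proof (rule PiE_I)
    fix y assume "y \<in> q ` bverts F"
    then obtain v where "v \<in> bverts F" "y = q v" by blast
    then show "h' y \<in> gverts G" using h factor by (auto simp: homs_def)
  qed (simp add: h'_def)
  ultimately have "h' \<in> homs G (bmap q F)"
    using h unfolding homs_def by simp
  from this factor show thesis by (rule that)
qed

definition glue_rel :: "(nat \<times> nat) set \<Rightarrow> (nat \<times> nat) set" where
  "glue_rel Ps = (Ps \<union> Ps\<inverse>)\<^sup>*"

definition glue_rep :: "(nat \<times> nat) set \<Rightarrow> nat \<Rightarrow> nat" where
  "glue_rep Ps x = Min {y. (x, y) \<in> glue_rel Ps}"

lemma glue_eq_bmap: "glue Ps F = bmap (glue_rep Ps) F"
  unfolding glue_def glue_rep_def glue_rel_def ..

lemma glue_rep_eq_iff: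
  assumes "finite Ps"
  shows "glue_rep Ps x = glue_rep Ps y \<longleftrightarrow> (x, y) \<in> glue_rel Ps"
proof -
  have sym: "sym (glue_rel Ps)"
    unfolding glue_rel_def by (intro sym_rtrancl sym_Un_converse)
  have trans: "trans (glue_rel Ps)"
    unfolding glue_rel_def by (rule trans_rtrancl)
  have rep: "(z, glue_rep Ps z) \<in> glue_rel Ps" for z
  proof -
    have "{y. (z, y) \<in> glue_rel Ps} \<subseteq> insert z (Range (Ps \<union> Ps\<inverse>))"
      unfolding glue_rel_def by (auto elim: rtranclE)
    then have "finite {y. (z, y) \<in> glue_rel Ps}"
      by (rule finite_subset) (simp add: finite_Range assms)
    moreover have "z \<in> {y. (z, y) \<in> glue_rel Ps}"
      by (simp add: glue_rel_def)
    ultimately show ?thesis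
      unfolding glue_rep_def by (metis Min_in empty_iff mem_Collect_eq)
  qed
  show ?thesis
  proof
    assume "glue_rep Ps x = glue_rep Ps y"
    then show "(x, y) \<in> glue_rel Ps"
      using rep[of x] rep[of y] sym trans by (metis symD transD)
  next
    assume "(x, y) \<in> glue_rel Ps"
    then have "{z. (x, z) \<in> glue_rel Ps} = {z. (y, z) \<in> glue_rel Ps}"
      using sym trans by (blast dest: symD transD)
    then show "glue_rep Ps x = glue_rep Ps y"
      unfolding glue_rep_def by simp
  qed
qed

lemma glue_rel_invariant:
  "(x, y) \<in> glue_rel Ps \<Longrightarrow> \<forall>(a, b)\<in>Ps. h a = h b \<Longrightarrow> h x = h y"
  unfolding glue_rel_def by (induction rule: rtrancl_induct) auto

lemma glue_bij:
  assumes "finite Ps" "Field Ps \<subseteq> bverts F" "\<forall>e\<in>bedges F. e \<subseteq> bverts F"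
  shows "bij_betw (\<lambda>h'. restrict (h' \<circ> glue_rep Ps) (bverts F)) (homs G (glue Ps F))
           {h\<in>homs G F. \<forall>(a, b)\<in>Ps. h a = h b}"
proof -
  let ?q = "glue_rep Ps" and ?V = "bverts F"
  let ?\<Phi> = "\<lambda>h'. restrict (h' \<circ> ?q) ?V"
  have into: "?\<Phi> h' \<in> {h\<in>homs G F. \<forall>(a, b)\<in>Ps. h a = h b}" if h': "h' \<in> homs G (bmap ?q F)" for h'
  proof -
    have "?\<Phi> h' \<in> homs G F"
      by (rule restrict_comp_in_homs[OF h']) (use assms(3) in auto)
    moreover have "?\<Phi> h' a = ?\<Phi> h' b" if "(a, b) \<in> Ps" for a b
    proof -
      have "a \<in> ?V" "b \<in> ?V" using that assms(2) by (auto intro: FieldI1 FieldI2)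
      moreover have "?q a = ?q b"
        using that glue_rep_eq_iff[OF assms(1)] by (auto simp: glue_rel_def)
      ultimately show ?thesis by simp
    qed
    ultimately show ?thesis by blast
  qed
  have onto: "h \<in> ?\<Phi> ` homs G (bmap ?q F)" if h: "h \<in> homs G F" "\<forall>(a, b)\<in>Ps. h a = h b" for h
  proof -
    have "\<forall>u\<in>?V. \<forall>v\<in>?V. ?q u = ?q v \<longrightarrow> h u = h v"
      using h(2) glue_rep_eq_iff[OF assms(1)] glue_rel_invariant by blast
    then obtain h' where h': "h' \<in> homs G (bmap ?q F)" "\<forall>v\<in>?V. h' (?q v) = h v"
      using homs_bmap_factor[OF h(1) _ assms(3)] by blast
    have "h \<in> extensional ?V" using h(1) unfolding homs_def PiE_def by blast
    then have "?\<Phi> h' = h"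
      using h'(2) by (intro extensionalityI[OF restrict_extensional]) auto
    with h'(1) show ?thesis by blast
  qed
  show ?thesis
    unfolding bij_betw_def glue_eq_bmap using inj_on_restrict_comp_bmap into onto by blast
qed

lemma hom_lab_glue:
  assumes "finite Ps" "Field Ps \<subseteq> bverts F" "\<forall>e\<in>bedges F. e \<subseteq> bverts F"
    and "set (labels F) \<subseteq> bverts F"
  shows "hom_lab G (glue Ps F) x =
    card {h\<in>homs G F. (\<forall>(a, b)\<in>Ps. h a = h b) \<and> map h (labels F) = x}"
proof -
  have "hom_lab G (glue Ps F) x = card {h'\<in>homs G (glue Ps F).
      map (restrict (h' \<circ> glue_rep Ps) (bverts F)) (labels F) = x}"
    unfolding hom_lab_def using assms(4) by (intro arg_cong[where f=card]) (auto simp: glue_eq_bmap)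
  also have "\<dots> = card {h\<in>{h\<in>homs G F. \<forall>(a, b)\<in>Ps. h a = h b}. map h (labels F) = x}"
    by (rule card_filter_bij_betw[OF glue_bij[OF assms(1-3)]])
  finally show ?thesis by (simp add: conj_ac)
qed

section \<open>Series and parallel composition and relabelling\<close>

definition disj_union :: "bgraph \<Rightarrow> bgraph \<Rightarrow> nat list \<Rightarrow> nat list \<Rightarrow> bgraph" where
  "disj_union F F' Il Ol = \<lparr>bverts = ev ` bverts F \<union> od ` bverts F',
      bedges = (\<lambda>e. ev ` e) ` bedges F \<union> (\<lambda>e. od ` e) ` bedges F',
      inl = Il, outl = Ol\<rparr>"

lemma disj_union_simps [simp]:
  "bverts (disj_union F F' Il Ol) = ev ` bverts F \<union> od ` bverts F'"
  "bedges (disj_union F F' Il Ol) = (\<lambda>e. ev ` e) ` bedges F \<union> (\<lambda>e. od ` e) ` bedges F'"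
  "inl (disj_union F F' Il Ol) = Il" "outl (disj_union F F' Il Ol) = Ol"
  by (simp_all add: disj_union_def)

lemma series_eq_glue_disj_union:
  "series F F' = glue (set (zip (map ev (outl F)) (map od (inl F'))))
     (disj_union F F' (map ev (inl F)) (map od (outl F')))"
  unfolding series_def disj_union_def ..

lemma parallel_eq_glue_disj_union:
  "parallel F F' = glue (set (zip (map ev (inl F)) (map od (inl F'))) \<union>
                         set (zip (map ev (outl F)) (map od (outl F'))))
     (disj_union F F' (map ev (inl F)) (map ev (outl F)))"
  unfolding parallel_def disj_union_def ..

lemma disj_union_edges_subset:
  assumes "\<forall>e\<in>bedges F. e \<subseteq> bverts F" "\<forall>e\<in>bedges F'. e \<subseteq> bverts F'"
  shows "\<forall>e\<in>bedges (disj_union F F' Il Ol). e \<subseteq> bverts (disj_union F F' Il Ol)"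
  using assms unfolding disj_union_simps
  by (metis (no_types, lifting) Un_iff image_iff image_mono le_supI1 le_supI2)

lemma ev_od_simps [simp]:
  "ev a div 2 = a" "od a div 2 = a" "ev a \<noteq> od b" "od b \<noteq> ev a"
  "ev a = ev b \<longleftrightarrow> a = b" "od a = od b \<longleftrightarrow> a = b"
  unfolding ev_def od_def by presburger+

definition join_homs :: "nat set \<Rightarrow> nat set \<Rightarrow> (nat \<Rightarrow> 'a) \<times> (nat \<Rightarrow> 'a) \<Rightarrow> nat \<Rightarrow> 'a" where
  "join_homs V1 V2 p v = (if v \<in> ev ` V1 then fst p (v div 2)
     else if v \<in> od ` V2 then snd p (v div 2) else undefined)"

lemma join_homs_ev [simp]: "a \<in> V1 \<Longrightarrow> join_homs V1 V2 p (ev a) = fst p a"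
  by (simp add: join_homs_def)

lemma join_homs_od [simp]: "b \<in> V2 \<Longrightarrow> join_homs V1 V2 p (od b) = snd p b"
  by (auto simp: join_homs_def)

lemma map_join_homs_ev: "set zs \<subseteq> V1 \<Longrightarrow> map (join_homs V1 V2 p) (map ev zs) = map (fst p) zs"
  by (induction zs) auto

lemma map_join_homs_od: "set zs \<subseteq> V2 \<Longrightarrow> map (join_homs V1 V2 p) (map od zs) = map (snd p) zs"
  by (induction zs) auto

lemma join_homs_in_homs:
  assumes h: "h1 \<in> homs G F" "h2 \<in> homs G F'"
    and edges: "\<forall>e\<in>bedges F. e \<subseteq> bverts F" "\<forall>e\<in>bedges F'. e \<subseteq> bverts F'"
  shows "join_homs (bverts F) (bverts F') (h1, h2) \<in> homs G (disj_union F F' Il Ol)"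
proof -
  let ?J = "join_homs (bverts F) (bverts F') (h1, h2)"
  have "?J \<in> bverts (disj_union F F' Il Ol) \<rightarrow>\<^sub>E gverts G"
    using h by (auto simp: homs_def PiE_def Pi_def extensional_def join_homs_def)
  moreover have "?J ` ev ` e = h1 ` e" if "e \<in> bedges F" for e
  proof -
    have "e \<subseteq> bverts F" using edges(1) that by blast
    then show ?thesis unfolding image_comp by (intro image_cong) (auto simp: subset_iff)
  qed
  moreover have "?J ` od ` e = h2 ` e" if "e \<in> bedges F'" for e
  proof -
    have "e \<subseteq> bverts F'" using edges(2) that by blast
    then show ?thesis unfolding image_comp by (intro image_cong) (auto simp: subset_iff)
  qed
  ultimately show ?thesis
    using h unfolding homs_def by auto
qed

lemma disj_union_bij:
  assumes edges: "\<forall>e\<in>bedges F. e \<subseteq> bverts F" "\<forall>e\<in>bedges F'. e \<subseteq> bverts F'"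
  shows "bij_betw (join_homs (bverts F) (bverts F')) (homs G F \<times> homs G F')
           (homs G (disj_union F F' Il Ol))"
proof (rule bij_betw_byWitness[where f' = "\<lambda>h. (restrict (h \<circ> ev) (bverts F), restrict (h \<circ> od) (bverts F'))"])
  let ?V1 = "bverts F" and ?V2 = "bverts F'" and ?B = "disj_union F F' Il Ol"
  let ?J = "join_homs ?V1 ?V2"
  have ext: "h \<in> extensional (bverts F0)" if "h \<in> homs G F0" for h and F0 :: bgraph
    using that unfolding homs_def PiE_def by blast
  show "\<forall>p\<in>homs G F \<times> homs G F'. (restrict (?J p \<circ> ev) ?V1, restrict (?J p \<circ> od) ?V2) = p"
  proof
    fix p assume "p \<in> homs G F \<times> homs G F'"
    then obtain h1 h2 where p: "p = (h1, h2)" and h: "h1 \<in> homs G F" "h2 \<in> homs G F'"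
      by blast
    have "restrict (?J (h1, h2) \<circ> ev) ?V1 = h1"
      by (rule extensionalityI[OF restrict_extensional ext[OF h(1)]]) simp
    moreover have "restrict (?J (h1, h2) \<circ> od) ?V2 = h2"
      by (rule extensionalityI[OF restrict_extensional ext[OF h(2)]]) simp
    ultimately show "(restrict (?J p \<circ> ev) ?V1, restrict (?J p \<circ> od) ?V2) = p"
      unfolding p by simp
  qed
  show "\<forall>h\<in>homs G ?B. ?J (restrict (h \<circ> ev) ?V1, restrict (h \<circ> od) ?V2) = h"
  proof
    fix h assume h: "h \<in> homs G ?B"
    have "?J (restrict (h \<circ> ev) ?V1, restrict (h \<circ> od) ?V2) \<in> extensional (bverts ?B)"
      by (auto simp: join_homs_def extensional_def)
    then show "?J (restrict (h \<circ> ev) ?V1, restrict (h \<circ> od) ?V2) = h"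
      using ext[OF h] by (rule extensionalityI) auto
  qed
  show "?J ` (homs G F \<times> homs G F') \<subseteq> homs G ?B"
    using join_homs_in_homs[OF _ _ edges] by blast
  show "(\<lambda>h. (restrict (h \<circ> ev) ?V1, restrict (h \<circ> od) ?V2)) ` homs G ?B \<subseteq> homs G F \<times> homs G F'"
    using edges by (auto intro!: restrict_comp_in_homs)
qed

lemma hom_lab_glue_disj_union:
  assumes "wf_bgraph k F" "wf_bgraph k F'"
    and "length xs = length ys" "set xs \<subseteq> bverts F" "set ys \<subseteq> bverts F'"
    and "set us \<subseteq> bverts F" "set vs \<subseteq> bverts F'" "Il @ Ol = map ev us @ map od vs"
  shows "hom_lab G (glue (set (zip (map ev xs) (map od ys))) (disj_union F F' Il Ol)) x =
    card {p\<in>homs G F \<times> homs G F'. map (fst p) xs = map (snd p) ys \<and> map (fst p) us @ map (snd p) vs = x}"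
proof -
  let ?Ps = "set (zip (map ev xs) (map od ys))" and ?B = "disj_union F F' Il Ol"
  let ?J = "join_homs (bverts F) (bverts F')"
  have edges: "\<forall>e\<in>bedges F. e \<subseteq> bverts F" "\<forall>e\<in>bedges F'. e \<subseteq> bverts F'"
    using assms(1,2) by (simp_all add: wf_bgraph_def)
  have labels_B: "labels ?B = map ev us @ map od vs"
    using assms(8) by (simp add: labels_def)
  have "Field ?Ps \<subseteq> bverts ?B"
    using assms(4,5) by (fastforce simp: Field_def dest: set_zip_leftD set_zip_rightD)
  moreover have "\<forall>e\<in>bedges ?B. e \<subseteq> bverts ?B"
    using edges by (rule disj_union_edges_subset)
  moreover have "set (labels ?B) \<subseteq> bverts ?B"
    using assms(6,7) unfolding labels_B by auto
  ultimately have "hom_lab G (glue ?Ps ?B) x =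
      card {h\<in>homs G ?B. (\<forall>(a, b)\<in>?Ps. h a = h b) \<and> map h (labels ?B) = x}"
    by (intro hom_lab_glue) simp_all
  also have "\<dots> = card {p\<in>homs G F \<times> homs G F'.
      (\<forall>(a, b)\<in>?Ps. ?J p a = ?J p b) \<and> map (?J p) (labels ?B) = x}"
    by (rule card_filter_bij_betw[OF disj_union_bij[OF edges], symmetric])
  also have "\<dots> = card {p\<in>homs G F \<times> homs G F'.
      map (fst p) xs = map (snd p) ys \<and> map (fst p) us @ map (snd p) vs = x}"
  proof -
    have zip_cond: "(\<forall>(a, b)\<in>?Ps. ?J p a = ?J p b) \<longleftrightarrow> map (fst p) xs = map (snd p) ys" for p
    proof -
      have "(\<forall>(a, b)\<in>?Ps. ?J p a = ?J p b) \<longleftrightarrow> map (?J p) (map ev xs) = map (?J p) (map od ys)"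
        by (rule ball_set_zip_iff_map_eq) (simp add: assms(3))
      also have "\<dots> \<longleftrightarrow> map (fst p) xs = map (snd p) ys"
        by (simp only: map_join_homs_ev[OF assms(4)] map_join_homs_od[OF assms(5)])
      finally show ?thesis .
    qed
    show ?thesis
      unfolding labels_B zip_cond map_append map_join_homs_ev[OF assms(6)] map_join_homs_od[OF assms(7)] ..
  qed
  finally show ?thesis .
qed

text \<open>Label tuples have the form u @ v; the tuples (u, w) and (w, v) compose to (u, v).\<close>

definition series_rel :: "nat \<Rightarrow> 'a list \<Rightarrow> 'a list \<Rightarrow> 'a list \<Rightarrow> bool" where
  "series_rel k x1 x2 x \<longleftrightarrow> drop k x1 = take k x2 \<and> take k x1 @ drop k x2 = x"

definition parallel_rel :: "'a list \<Rightarrow> 'a list \<Rightarrow> 'a list \<Rightarrow> bool" where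
  "parallel_rel x1 x2 x \<longleftrightarrow> x1 = x \<and> x2 = x"

definition perm_rel :: "nat \<Rightarrow> (nat \<Rightarrow> nat) \<Rightarrow> 'a list \<Rightarrow> 'a list \<Rightarrow> bool" where
  "perm_rel k \<sigma> x y \<longleftrightarrow> map (\<lambda>i. x ! \<sigma> i) [0..<2 * k] = y"

lemma hom_lab_series:
  assumes "wf_bgraph k F" "wf_bgraph k F'" "finite (gverts G)"
  shows "hom_lab G (series F F') x = (\<Sum>x1\<in>tuples k G. \<Sum>x2\<in>tuples k G.
    if series_rel k x1 x2 x then hom_lab G F x1 * hom_lab G F' x2 else 0)"
proof -
  have "hom_lab G (series F F') x = card {p\<in>homs G F \<times> homs G F'.
      map (fst p) (outl F) = map (snd p) (inl F') \<and> map (fst p) (inl F) @ map (snd p) (outl F') = x}"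
    unfolding series_eq_glue_disj_union using assms(1,2)
    by (intro hom_lab_glue_disj_union) (auto simp: wf_bgraph_def labels_def)
  also have "\<dots> = card {p\<in>homs G F \<times> homs G F'.
      series_rel k (map (fst p) (labels F)) (map (snd p) (labels F')) x}"
    using assms(1,2) by (simp add: series_rel_def labels_def wf_bgraph_def)
  also have "\<dots> = (\<Sum>x1\<in>tuples k G. \<Sum>x2\<in>tuples k G.
      if series_rel k x1 x2 x then hom_lab G F x1 * hom_lab G F' x2 else 0)"
    by (rule card_homs_product_filter_labels[OF assms])
  finally show ?thesis .
qed

lemma hom_lab_parallel:
  assumes "wf_bgraph k F" "wf_bgraph k F'" "finite (gverts G)"
  shows "hom_lab G (parallel F F') x = (\<Sum>x1\<in>tuples k G. \<Sum>x2\<in>tuples k G.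
    if parallel_rel x1 x2 x then hom_lab G F x1 * hom_lab G F' x2 else 0)"
proof -
  have "parallel F F' = glue (set (zip (map ev (labels F)) (map od (labels F'))))
      (disj_union F F' (map ev (inl F)) (map ev (outl F)))"
    using assms(1,2) unfolding parallel_eq_glue_disj_union by (simp add: labels_def wf_bgraph_def)
  also have "hom_lab G \<dots> x = card {p\<in>homs G F \<times> homs G F'.
      map (fst p) (labels F) = map (snd p) (labels F') \<and> map (fst p) (labels F) @ map (snd p) [] = x}"
    by (rule hom_lab_glue_disj_union) (use assms(1,2) in \<open>auto simp: wf_bgraph_def labels_def\<close>)
  also have "\<dots> = card {p\<in>homs G F \<times> homs G F'.
      parallel_rel (map (fst p) (labels F)) (map (snd p) (labels F')) x}"
    by (intro arg_cong[where f=card] Collect_cong) (auto simp: parallel_rel_def)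
  also have "\<dots> = (\<Sum>x1\<in>tuples k G. \<Sum>x2\<in>tuples k G.
      if parallel_rel x1 x2 x then hom_lab G F x1 * hom_lab G F' x2 else 0)"
    by (rule card_homs_product_filter_labels[OF assms])
  finally show ?thesis .
qed

lemma perm_labels_simps [simp]:
  "bverts (perm_labels k \<sigma> F) = bverts F" "bedges (perm_labels k \<sigma> F) = bedges F"
  "inl (perm_labels k \<sigma> F) = map (\<lambda>i. labels F ! \<sigma> i) [0..<k]"
  "outl (perm_labels k \<sigma> F) = map (\<lambda>i. labels F ! \<sigma> i) [k..<2 * k]"
  by (simp_all add: perm_labels_def labels_def Let_def)

lemma homs_perm_labels [simp]: "homs G (perm_labels k \<sigma> F) = homs G F"
  by (simp add: homs_def)

lemma labels_perm_labels: "labels (perm_labels k \<sigma> F) = map (\<lambda>i. labels F ! \<sigma> i) [0..<2 * k]"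
proof -
  have "[0..<2 * k] = [0..<k] @ [k..<2 * k]"
    using upt_add_eq_append[of 0 k k] by (simp add: mult_2)
  then show ?thesis by (simp add: labels_def)
qed

lemma hom_lab_perm_labels:
  assumes "wf_bgraph k F" "finite (gverts G)" "\<forall>i<2 * k. \<sigma> i < 2 * k"
  shows "hom_lab G (perm_labels k \<sigma> F) y = (\<Sum>x\<in>tuples k G. if perm_rel k \<sigma> x y then hom_lab G F x else 0)"
proof -
  have "length (labels F) = 2 * k" using assms(1) by (simp add: wf_bgraph_def labels_def)
  then have "hom_lab G (perm_labels k \<sigma> F) y = card {h\<in>homs G F. perm_rel k \<sigma> (map h (labels F)) y}"
    unfolding hom_lab_def homs_perm_labels labels_perm_labels perm_rel_def
    using assms(3) by (intro arg_cong[where f=card]) auto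
  also have "\<dots> = (\<Sum>x\<in>tuples k G. if perm_rel k \<sigma> x y then hom_lab G F x else 0)"
    by (rule card_homs_filter_labels[OF assms(1,2)])
  finally show ?thesis .
qed

lemma wf_bgraph_bmap: "wf_bgraph k F \<Longrightarrow> wf_bgraph k (bmap q F)"
  by (auto simp: wf_bgraph_def)

lemma card_bmap_le: "finite (bverts F) \<Longrightarrow> card (bverts (bmap q F)) \<le> card (bverts F)"
  by (simp add: card_image_le)

lemma wf_bgraph_glue_disj_union:
  assumes "wf_bgraph k F" "wf_bgraph k F'" "length Il = k" "length Ol = k"
    and "set (Il @ Ol) \<subseteq> ev ` bverts F \<union> od ` bverts F'"
  shows "wf_bgraph k (glue Ps (disj_union F F' Il Ol))"
proof -
  have "\<forall>e\<in>bedges (disj_union F F' Il Ol). e \<subseteq> bverts (disj_union F F' Il Ol)"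
    using assms(1,2) unfolding wf_bgraph_def by (intro disj_union_edges_subset) simp_all
  then have "wf_bgraph k (disj_union F F' Il Ol)"
    using assms unfolding wf_bgraph_def labels_def by simp
  then show ?thesis unfolding glue_eq_bmap by (rule wf_bgraph_bmap)
qed

lemma card_glue_disj_union_le:
  assumes "finite (bverts F)" "finite (bverts F')"
  shows "card (bverts (glue Ps (disj_union F F' Il Ol))) \<le> card (bverts F) + card (bverts F')"
proof -
  have "card (bverts (glue Ps (disj_union F F' Il Ol))) \<le> card (bverts (disj_union F F' Il Ol))"
    unfolding glue_eq_bmap using assms by (intro card_bmap_le) simp
  also have "\<dots> \<le> card (ev ` bverts F) + card (od ` bverts F')"
    by (simp add: card_Un_le)
  also have "\<dots> \<le> card (bverts F) + card (bverts F')"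
    using assms by (intro add_mono card_image_le)
  finally show ?thesis .
qed

lemma wf_bgraph_series: "wf_bgraph k F \<Longrightarrow> wf_bgraph k F' \<Longrightarrow> wf_bgraph k (series F F')"
  unfolding series_eq_glue_disj_union
  by (rule wf_bgraph_glue_disj_union) (auto simp: wf_bgraph_def labels_def)

lemma card_series_le:
  "wf_bgraph k F \<Longrightarrow> wf_bgraph k F' \<Longrightarrow> card (bverts (series F F')) \<le> card (bverts F) + card (bverts F')"
  unfolding series_eq_glue_disj_union wf_bgraph_def by (intro card_glue_disj_union_le) simp_all

lemma wf_bgraph_parallel: "wf_bgraph k F \<Longrightarrow> wf_bgraph k F' \<Longrightarrow> wf_bgraph k (parallel F F')"
  unfolding parallel_eq_glue_disj_union
  by (rule wf_bgraph_glue_disj_union) (auto simp: wf_bgraph_def labels_def)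

lemma card_parallel_le:
  "wf_bgraph k F \<Longrightarrow> wf_bgraph k F' \<Longrightarrow> card (bverts (parallel F F')) \<le> card (bverts F) + card (bverts F')"
  unfolding parallel_eq_glue_disj_union wf_bgraph_def by (intro card_glue_disj_union_le) simp_all

lemma wf_bgraph_perm_labels:
  assumes "wf_bgraph k F" "\<forall>i<2 * k. \<sigma> i < 2 * k"
  shows "wf_bgraph k (perm_labels k \<sigma> F)"
proof -
  have "length (labels F) = 2 * k" "set (labels F) \<subseteq> bverts F"
    using assms(1) by (simp_all add: wf_bgraph_def labels_def)
  then have "labels F ! \<sigma> i \<in> bverts F" if "i < 2 * k" for i
    using assms(2) that nth_mem[of "\<sigma> i" "labels F"] by auto
  then show ?thesis
    using assms(1) unfolding wf_bgraph_def labels_perm_labels by auto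
qed

lemma rot_less:
  assumes "k \<ge> 1"
  shows "rot k r i < 2 * k"
proof -
  have "(cyc_pos k i + r) mod (2 * k) < 2 * k"
    using assms by simp
  then have "(cyc_pos k i + r) mod (2 * k) < length (cyc k)"
    by (simp add: cyc_def)
  then have "rot k r i \<in> set (cyc k)"
    unfolding rot_def by (rule nth_mem)
  moreover have "set (cyc k) \<subseteq> {0..<2 * k}"
    by (auto simp: cyc_def)
  ultimately show ?thesis by auto
qed

lemma Ck_group_less: "k \<ge> 1 \<Longrightarrow> \<sigma> \<in> Ck_group k \<Longrightarrow> \<forall>i<2 * k. \<sigma> i < 2 * k"
  unfolding Ck_group_def using rot_less by auto

lemma minor_step_wf:
  assumes "minor_step F F'" "wf_bgraph k F"
  shows "wf_bgraph k F' \<and> card (bverts F') \<le> card (bverts F)"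
  using assms
proof (induction rule: minor_step.induct)
  case (edge_del e F)
  then show ?case by (auto simp: wf_bgraph_def labels_def)
next
  case (edge_contr a b F)
  let ?F = "F\<lparr>bedges := bedges F - {{a, b}}\<rparr>"
  let ?q = "\<lambda>x. if x = b then a else x"
  have wf: "wf_bgraph k ?F" using edge_contr by (auto simp: wf_bgraph_def labels_def)
  then have "card (bverts (bmap ?q ?F)) \<le> card (bverts F)"
    using card_bmap_le[of ?F ?q] by (simp add: wf_bgraph_def)
  with wf_bgraph_bmap[OF wf] show ?case by (rule conjI)
next
  case (vert_del x F)
  then show ?case by (auto simp: wf_bgraph_def labels_def intro: card_mono)
qed

lemma bminor_wf:
  assumes "bminor F M" "wf_bgraph k M"
  shows "wf_bgraph k F \<and> card (bverts F) \<le> card (bverts M)"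
  using assms(1) unfolding bminor_def
proof (induction rule: rtranclp_induct)
  case base then show ?case using assms(2) by simp
next
  case (step F' F'')
  then show ?case using minor_step_wf[of F' F'' k] by auto
qed

lemma Q_wf:
  assumes "k \<ge> 1" "F \<in> Q k"
  shows "wf_bgraph k F \<and> card (bverts F) \<le> 2 * k"
proof -
  have "wf_bgraph k (Ck k)" "wf_bgraph k (Mk k)"
    using assms(1) by (auto simp: wf_bgraph_def labels_def Ck_def Mk_def)
  moreover have "card (bverts (Ck k)) = 2 * k" "card (bverts (Mk k)) = 2 * k"
    by (simp_all add: Ck_def Mk_def)
  ultimately show ?thesis
    using assms(2) bminor_wf[of F "Ck k" k] bminor_wf[of F "Mk k" k]
    unfolding Q_def QP_def QS_def by auto
qed

lemma P_wf:
  assumes "k \<ge> 1" "F \<in> P k"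
  shows "wf_bgraph k F"
  using assms(2)
proof (induction rule: P.induct)
  case (base F) then show ?case using Q_wf[OF assms(1)] by blast
next
  case (ser F F') then show ?case by (blast intro: wf_bgraph_series)
next
  case (par F R) then show ?case using Q_wf[OF assms(1), of R] by (auto simp: Q_def intro: wf_bgraph_parallel)
next
  case (perm F \<sigma>) then show ?case using Ck_group_less[OF assms(1)] by (auto intro: wf_bgraph_perm_labels)
qed

fun P_depth :: "nat \<Rightarrow> nat \<Rightarrow> bgraph set" where
  "P_depth k 0 = Q k"
| "P_depth k (Suc d) = P_depth k d \<union> {series F F' | F F'. F \<in> P_depth k d \<and> F' \<in> P_depth k d}
     \<union> {parallel F R | F R. F \<in> P_depth k d \<and> R \<in> QP k}
     \<union> {perm_labels k \<sigma> F | \<sigma> F. F \<in> P_depth k d \<and> \<sigma> \<in> Ck_group k}"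

lemma P_depth_subset_P: "P_depth k d \<subseteq> P k"
  by (induction d) (auto intro: P.intros)

lemma Q_subset_P_depth: "Q k \<subseteq> P_depth k d"
  by (induction d) auto

lemma P_depth_Suc_closed:
  "F \<in> P_depth k d \<Longrightarrow> F' \<in> P_depth k d \<Longrightarrow> series F F' \<in> P_depth k (Suc d)"
  "F \<in> P_depth k d \<Longrightarrow> R \<in> QP k \<Longrightarrow> parallel F R \<in> P_depth k (Suc d)"
  "F \<in> P_depth k d \<Longrightarrow> \<sigma> \<in> Ck_group k \<Longrightarrow> perm_labels k \<sigma> F \<in> P_depth k (Suc d)"
  by auto

lemma card_P_depth_le:
  assumes "k \<ge> 1" "F \<in> P_depth k d"
  shows "card (bverts F) \<le> 2 * k * 2 ^ d"
  using assms(2)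
proof (induction d arbitrary: F)
  case 0 then show ?case using Q_wf[OF assms(1)] by auto
next
  case (Suc d)
  have wf: "wf_bgraph k F" if "F \<in> P_depth k d" for F
    using P_wf[OF assms(1)] P_depth_subset_P that by blast
  have QP_small: "wf_bgraph k R \<and> card (bverts R) \<le> 2 * k * 2 ^ d" if "R \<in> QP k" for R
  proof -
    have "wf_bgraph k R \<and> card (bverts R) \<le> 2 * k"
      using Q_wf[OF assms(1), of R] that by (simp add: Q_def)
    moreover have "2 * k \<le> 2 * k * 2 ^ d" by simp
    ultimately show ?thesis by linarith
  qed
  from Suc.prems consider "F \<in> P_depth k d"
    | F1 F2 where "F = series F1 F2" "F1 \<in> P_depth k d" "F2 \<in> P_depth k d"
    | F1 R where "F = parallel F1 R" "F1 \<in> P_depth k d" "R \<in> QP k"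
    | \<sigma> F1 where "F = perm_labels k \<sigma> F1" "F1 \<in> P_depth k d"
    by auto
  then show ?case
  proof cases
    case 1
    then show ?thesis using Suc.IH[of F] by simp
  next
    case 2
    then have "card (bverts F) \<le> card (bverts F1) + card (bverts F2)"
      using card_series_le wf by blast
    then show ?thesis using Suc.IH[OF 2(2)] Suc.IH[OF 2(3)] by simp
  next
    case 3
    then have "card (bverts F) \<le> card (bverts F1) + card (bverts R)"
      using card_parallel_le wf QP_small by blast
    then show ?thesis using Suc.IH[OF 3(2)] QP_small[OF 3(3)] by simp
  next
    case 4
    then show ?thesis using Suc.IH[OF 4(2)] by simp
  qed
qed

section \<open>Stabilising chains of spans\<close>

text \<open>The function spaces used below are infinite-dimensional, and dim of a set with
  infinite-dimensional span is 0; all dimension arguments therefore take place inside the span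
  of a finite set W.\<close>

context vector_space
begin

lemma card_le_dim_if_independent:
  assumes "independent A" "A \<subseteq> span T" "T \<subseteq> span W" "finite W"
  shows "card A \<le> dim T"
proof -
  obtain C where C: "C \<subseteq> T" "independent C" "T \<subseteq> span C" "card C = dim T"
    by (rule basis_exists)
  have "finite C"
    using independent_span_bound[OF assms(4) C(2)] C(1) assms(3) by blast
  moreover have "A \<subseteq> span C"
    using assms(2) span_minimal[OF C(3) subspace_span] by blast
  ultimately show ?thesis
    using independent_span_bound[OF _ assms(1)] C(4) by metis
qed

lemma dim_less_if_span_grows:
  assumes "S \<subseteq> T" "T \<subseteq> span W" "finite W" "span S \<noteq> span T"
  shows "dim S < dim T"
proof -
  have "\<not> T \<subseteq> span S"
  proof
    assume "T \<subseteq> span S"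
    moreover have "S \<subseteq> span T" using assms(1) span_superset by (rule subset_trans)
    ultimately have "span S = span T" by (simp add: span_eq)
    with assms(4) show False by (rule notE)
  qed
  then obtain t where t: "t \<in> T" "t \<notin> span S" by blast
  obtain B where B: "B \<subseteq> S" "independent B" "S \<subseteq> span B" "card B = dim S"
    by (rule basis_exists)
  have "B \<subseteq> span W" using B(1) assms(1,2) by (meson subset_trans)
  then have "finite B" using independent_span_bound[OF assms(3) B(2)] by simp
  have "t \<notin> span B" using t(2) span_mono[OF B(1)] by blast
  then have "independent (insert t B)" "t \<notin> B"
    using independent_insertI[OF _ B(2)] span_base by blast+
  moreover have "insert t B \<subseteq> span T"
    using t(1) B(1) assms(1) span_superset[of T] by blast
  ultimately have "card (insert t B) \<le> dim T"
    using card_le_dim_if_independent[OF _ _ assms(2,3)] by blast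
  then show ?thesis using B(4) \<open>finite B\<close> \<open>t \<notin> B\<close> by simp
qed

lemma span_chain_stabilises:
  assumes "\<And>d. S d \<subseteq> S (Suc d)" "\<And>d. S d \<subseteq> span W" "finite W"
  shows "\<exists>d\<le>card W. span (S (Suc d)) = span (S d)"
proof (rule ccontr)
  assume grows: "\<not> (\<exists>d\<le>card W. span (S (Suc d)) = span (S d))"
  have lower: "d \<le> dim (S d)" if "d \<le> Suc (card W)" for d
    using that
  proof (induction d)
    case (Suc d)
    then have "span (S d) \<noteq> span (S (Suc d))"
      using grows by (metis Suc_le_mono)
    then have "dim (S d) < dim (S (Suc d))"
      by (rule dim_less_if_span_grows[OF assms(1,2,3)])
    moreover have "d \<le> dim (S d)"
      using Suc by simp
    ultimately show ?case by linarith
  qed simp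
  have "Suc (card W) \<le> dim (S (Suc (card W)))"
    by (rule lower) simp
  moreover have "dim (S (Suc (card W))) \<le> card W"
    by (rule dim_le_card[OF assms(2,3)])
  ultimately show False by linarith
qed

lemma linear_image_span_subset:
  assumes "Vector_Spaces.linear scale scale f" "f ` A \<subseteq> span A" "x \<in> span A"
  shows "f x \<in> span A"
proof -
  have "f x \<in> span (f ` A)"
    using module_hom.span_image[OF assms(1)[unfolded linear_iff_module_hom]] assms(3) by blast
  then show ?thesis using span_minimal[OF assms(2) subspace_span] by blast
qed

lemma bilinear_image_span_subset:
  assumes "\<And>w. Vector_Spaces.linear scale scale (\<lambda>v. g v w)" "\<And>v. Vector_Spaces.linear scale scale (g v)"
    and "\<And>a b. a \<in> A \<Longrightarrow> b \<in> A \<Longrightarrow> g a b \<in> span A"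
    and "u \<in> span A" "w \<in> span A"
  shows "g u w \<in> span A"
proof -
  have "g u b \<in> span A" if "b \<in> A" for b
    using assms(3) that by (intro linear_image_span_subset[OF assms(1) _ assms(4)]) auto
  then show ?thesis
    by (intro linear_image_span_subset[OF assms(2) _ assms(5)]) auto
qed

end

section \<open>Homomorphism vectors\<close>

definition fscale :: "real \<Rightarrow> ('s \<Rightarrow> real) \<Rightarrow> 's \<Rightarrow> real" where
  "fscale c f = (\<lambda>x. c * f x)"

interpretation fun_space: vector_space fscale
  unfolding vector_space_def fscale_def by (simp add: fun_eq_iff algebra_simps)

lemma linear_fun_spaceI:
  assumes "\<And>v w. f (v + w) = f v + f w" "\<And>c v. f (fscale c v) = fscale c (f v)"
  shows "Vector_Spaces.linear fscale fscale f"
  unfolding Vector_Spaces.linear_iff by (intro conjI allI fun_space.vector_space_axioms assms)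

lemma sum_fun_apply: "sum f A x = (\<Sum>a\<in>A. f a x)"
  by (induction A rule: infinite_finite_induct) auto

definition unit_vec :: "'s \<Rightarrow> 's \<Rightarrow> real" where
  "unit_vec t = (\<lambda>s. if s = t then 1 else 0)"

lemma in_span_unit_vecs:
  assumes "finite U" "\<And>s. s \<notin> U \<Longrightarrow> v s = 0"
  shows "v \<in> fun_space.span (unit_vec ` U)"
proof -
  have "v = (\<Sum>t\<in>U. fscale (v t) (unit_vec t))"
  proof
    fix s
    have "(\<Sum>t\<in>U. fscale (v t) (unit_vec t)) s = (\<Sum>t\<in>U. if t = s then v t else 0)"
      unfolding sum_fun_apply fscale_def unit_vec_def by (rule sum.cong) auto
    also have "\<dots> = v s" using assms by (simp add: sum.delta)
    finally show "v s = (\<Sum>t\<in>U. fscale (v t) (unit_vec t)) s" by simp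
  qed
  also have "\<dots> \<in> fun_space.span (unit_vec ` U)"
    by (intro fun_space.span_sum fun_space.span_scale fun_space.span_base) simp
  finally show ?thesis .
qed

type_synonym ('a, 'b) hvec = "'a list + 'b list \<Rightarrow> real"

definition hom_vec :: "'a sgraph \<Rightarrow> 'b sgraph \<Rightarrow> bgraph \<Rightarrow> ('a, 'b) hvec" where
  "hom_vec G H F = (\<lambda>s. case s of Inl x \<Rightarrow> real (hom_lab G F x) | Inr y \<Rightarrow> real (hom_lab H F y))"

definition bil_op :: "nat \<Rightarrow> 'a sgraph \<Rightarrow> 'b sgraph \<Rightarrow> ('a list \<Rightarrow> 'a list \<Rightarrow> 'a list \<Rightarrow> bool) \<Rightarrow>
    ('b list \<Rightarrow> 'b list \<Rightarrow> 'b list \<Rightarrow> bool) \<Rightarrow> ('a, 'b) hvec \<Rightarrow> ('a, 'b) hvec \<Rightarrow> ('a, 'b) hvec" where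
  "bil_op k G H RG RH v w = (\<lambda>s. case s of
      Inl x \<Rightarrow> (\<Sum>x1\<in>tuples k G. \<Sum>x2\<in>tuples k G. if RG x1 x2 x then v (Inl x1) * w (Inl x2) else 0)
    | Inr y \<Rightarrow> (\<Sum>y1\<in>tuples k H. \<Sum>y2\<in>tuples k H. if RH y1 y2 y then v (Inr y1) * w (Inr y2) else 0))"

definition lin_op :: "nat \<Rightarrow> 'a sgraph \<Rightarrow> 'b sgraph \<Rightarrow> ('a list \<Rightarrow> 'a list \<Rightarrow> bool) \<Rightarrow>
    ('b list \<Rightarrow> 'b list \<Rightarrow> bool) \<Rightarrow> ('a, 'b) hvec \<Rightarrow> ('a, 'b) hvec" where
  "lin_op k G H RG RH v = (\<lambda>s. case s of
      Inl x \<Rightarrow> (\<Sum>x1\<in>tuples k G. if RG x1 x then v (Inl x1) else 0)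
    | Inr y \<Rightarrow> (\<Sum>y1\<in>tuples k H. if RH y1 y then v (Inr y1) else 0))"

definition hom_diff :: "nat \<Rightarrow> 'a sgraph \<Rightarrow> 'b sgraph \<Rightarrow> ('a, 'b) hvec \<Rightarrow> real" where
  "hom_diff k G H v = (\<Sum>x\<in>tuples k G. v (Inl x)) - (\<Sum>y\<in>tuples k H. v (Inr y))"

lemma if_zero_add: "(if c then a + b else 0) = (if c then a else 0) + (if c then b else (0::real))"
  by simp

lemma if_zero_mult: "(if c then r * a else 0) = r * (if c then a else (0::real))"
  by simp

lemma of_nat_if_zero: "of_nat (if c then a else 0) = (if c then of_nat a else (0::real))"
  by simp

lemma linear_bil_op_left: "Vector_Spaces.linear fscale fscale (\<lambda>v. bil_op k G H RG RH v w)"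
  by (rule linear_fun_spaceI)
    (auto simp: bil_op_def fscale_def fun_eq_iff distrib_right mult.assoc if_zero_add if_zero_mult
      sum.distrib sum_distrib_left split: sum.split cong: if_cong)

lemma linear_bil_op_right: "Vector_Spaces.linear fscale fscale (bil_op k G H RG RH v)"
  by (rule linear_fun_spaceI)
    (auto simp: bil_op_def fscale_def fun_eq_iff distrib_left mult.left_commute if_zero_add if_zero_mult
      sum.distrib sum_distrib_left split: sum.split cong: if_cong)

lemma linear_lin_op: "Vector_Spaces.linear fscale fscale (lin_op k G H RG RH)"
  by (rule linear_fun_spaceI)
    (auto simp: lin_op_def fscale_def fun_eq_iff if_zero_add if_zero_mult
      sum.distrib sum_distrib_left split: sum.split cong: if_cong)

lemma hom_vec_series:
  assumes "wf_bgraph k F" "wf_bgraph k F'" "finite (gverts G)" "finite (gverts H)"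
  shows "hom_vec G H (series F F') = bil_op k G H (series_rel k) (series_rel k) (hom_vec G H F) (hom_vec G H F')"
  using hom_lab_series[OF assms(1,2,3)] hom_lab_series[OF assms(1,2,4)]
  by (auto simp: hom_vec_def bil_op_def fun_eq_iff of_nat_sum of_nat_if_zero split: sum.split cong: if_cong)

lemma hom_vec_parallel:
  assumes "wf_bgraph k F" "wf_bgraph k F'" "finite (gverts G)" "finite (gverts H)"
  shows "hom_vec G H (parallel F F') = bil_op k G H parallel_rel parallel_rel (hom_vec G H F) (hom_vec G H F')"
  using hom_lab_parallel[OF assms(1,2,3)] hom_lab_parallel[OF assms(1,2,4)]
  by (auto simp: hom_vec_def bil_op_def fun_eq_iff of_nat_sum of_nat_if_zero split: sum.split cong: if_cong)

lemma hom_vec_perm_labels: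
  assumes "wf_bgraph k F" "finite (gverts G)" "finite (gverts H)" "\<forall>i<2 * k. \<sigma> i < 2 * k"
  shows "hom_vec G H (perm_labels k \<sigma> F) = lin_op k G H (perm_rel k \<sigma>) (perm_rel k \<sigma>) (hom_vec G H F)"
  using hom_lab_perm_labels[OF assms(1,2,4)] hom_lab_perm_labels[OF assms(1,3,4)]
  by (auto simp: hom_vec_def lin_op_def fun_eq_iff of_nat_sum of_nat_if_zero split: sum.split cong: if_cong)

lemma hom_diff_hom_vec:
  assumes "wf_bgraph k F" "finite (gverts G)" "finite (gverts H)"
  shows "hom_diff k G H (hom_vec G H F) = real (hom (ug F) G) - real (hom (ug F) H)"
  unfolding hom_diff_def hom_vec_def
  using hom_eq_sum_hom_lab[OF assms(1,2)] hom_eq_sum_hom_lab[OF assms(1,3)] by simp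

lemma hom_diff_vanishes_on_span:
  assumes "\<And>v. v \<in> A \<Longrightarrow> hom_diff k G H v = 0" "v \<in> fun_space.span A"
  shows "hom_diff k G H v = 0"
  using assms(2)
proof (induction rule: fun_space.span_induct_alt)
  case (step c x y)
  then show ?case
    using assms(1) by (simp add: hom_diff_def fscale_def sum.distrib flip: sum_distrib_left)
qed (simp add: hom_diff_def)

definition label_index :: "nat \<Rightarrow> 'a sgraph \<Rightarrow> 'b sgraph \<Rightarrow> ('a list + 'b list) set" where
  "label_index k G H = Inl ` tuples k G \<union> Inr ` tuples k H"

lemma hom_vec_in_span_unit_vecs:
  assumes "wf_bgraph k F" "finite (gverts G)" "finite (gverts H)"
  shows "hom_vec G H F \<in> fun_space.span (unit_vec ` label_index k G H)"
proof (rule in_span_unit_vecs)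
  show "finite (label_index k G H)"
    using assms(2,3) by (simp add: label_index_def finite_tuples)
  fix s assume "s \<notin> label_index k G H"
  then show "hom_vec G H F s = 0"
    using hom_lab_eq_0[OF assms(1), of _ G] hom_lab_eq_0[OF assms(1), of _ H]
    by (cases s) (auto simp: hom_vec_def label_index_def image_iff)
qed

lemma card_unit_vecs_le:
  assumes "finite (gverts G)" "finite (gverts H)" "card (gverts G) \<le> n" "card (gverts H) \<le> n"
  shows "card (unit_vec ` label_index k G H) \<le> 2 * n ^ (2 * k)"
proof -
  have "card (unit_vec ` label_index k G H) \<le> card (label_index k G H)"
    using assms(1,2) by (intro card_image_le) (simp add: label_index_def finite_tuples)
  also have "\<dots> \<le> card (Inl ` tuples k G :: ('a list + 'b list) set) + card (Inr ` tuples k H :: ('a list + 'b list) set)"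
    unfolding label_index_def by (rule card_Un_le)
  also have "\<dots> = card (gverts G) ^ (2 * k) + card (gverts H) ^ (2 * k)"
    using assms(1,2) by (simp add: card_image card_tuples)
  also have "\<dots> \<le> n ^ (2 * k) + n ^ (2 * k)"
    using assms(3,4) by (intro add_mono power_mono) simp_all
  finally show ?thesis by simp
qed

lemma exists_stable_depth:
  assumes "k \<ge> 1" "finite (gverts G)" "finite (gverts H)" "card (gverts G) \<le> n" "card (gverts H) \<le> n"
  obtains D where "D \<le> 2 * n ^ (2 * k)"
    "fun_space.span (hom_vec G H ` P_depth k (Suc D)) = fun_space.span (hom_vec G H ` P_depth k D)"
proof -
  let ?W = "unit_vec ` label_index k G H"
  have "hom_vec G H ` P_depth k d \<subseteq> hom_vec G H ` P_depth k (Suc d)" for d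
    by (rule image_mono) auto
  moreover have "hom_vec G H ` P_depth k d \<subseteq> fun_space.span ?W" for d
  proof clarify
    fix F assume "F \<in> P_depth k d"
    then have "wf_bgraph k F" using P_wf[OF assms(1)] P_depth_subset_P by blast
    then show "hom_vec G H F \<in> fun_space.span ?W"
      by (rule hom_vec_in_span_unit_vecs[OF _ assms(2,3)])
  qed
  moreover have "finite ?W"
    using assms(2,3) by (simp add: label_index_def finite_tuples)
  ultimately have "\<exists>D\<le>card ?W. fun_space.span (hom_vec G H ` P_depth k (Suc D)) =
      fun_space.span (hom_vec G H ` P_depth k D)"
    by (rule fun_space.span_chain_stabilises[of "\<lambda>d. hom_vec G H ` P_depth k d"])
  then obtain D where D: "D \<le> card ?W"
    "fun_space.span (hom_vec G H ` P_depth k (Suc D)) = fun_space.span (hom_vec G H ` P_depth k D)"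
    by blast
  show thesis
    by (rule that[OF le_trans[OF D(1) card_unit_vecs_le[OF assms(2-5)]] D(2)])
qed

lemma wf_bgraph_P_depth: "k \<ge> 1 \<Longrightarrow> F \<in> P_depth k d \<Longrightarrow> wf_bgraph k F"
  using P_wf P_depth_subset_P by blast

lemma hom_vec_P_depth_Suc_in_stable_span:
  assumes "fun_space.span (hom_vec G H ` P_depth k (Suc D)) = fun_space.span (hom_vec G H ` P_depth k D)"
    and "F \<in> P_depth k (Suc D)"
  shows "hom_vec G H F \<in> fun_space.span (hom_vec G H ` P_depth k D)"
proof -
  have "hom_vec G H F \<in> fun_space.span (hom_vec G H ` P_depth k (Suc D))"
    using assms(2) by (intro fun_space.span_base imageI)
  then show ?thesis unfolding assms(1) .
qed

lemma hom_vec_in_stable_span: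
  assumes "k \<ge> 1" "finite (gverts G)" "finite (gverts H)"
    and stable: "fun_space.span (hom_vec G H ` P_depth k (Suc D)) = fun_space.span (hom_vec G H ` P_depth k D)"
    and "F \<in> P k"
  shows "hom_vec G H F \<in> fun_space.span (hom_vec G H ` P_depth k D)"
proof -
  let ?S = "fun_space.span (hom_vec G H ` P_depth k D)"
  note next_depth = hom_vec_P_depth_Suc_in_stable_span[OF stable]
  note wf_D = wf_bgraph_P_depth[OF assms(1)] and wf_P = P_wf[OF assms(1)]
  show ?thesis
    using assms(5)
  proof (induction rule: P.induct)
    case (base F)
    then show ?case using Q_subset_P_depth by (intro fun_space.span_base imageI) blast
  next
    case (ser F F')
    have "bil_op k G H (series_rel k) (series_rel k) a b \<in> ?S"
      if "a \<in> hom_vec G H ` P_depth k D" "b \<in> hom_vec G H ` P_depth k D" for a b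
      using that by (auto simp: hom_vec_series[OF wf_D wf_D assms(2,3), symmetric]
          intro!: next_depth P_depth_Suc_closed)
    then show ?case
      unfolding hom_vec_series[OF wf_P[OF ser.hyps(1)] wf_P[OF ser.hyps(2)] assms(2,3)]
      by (rule fun_space.bilinear_image_span_subset[where g = "bil_op k G H (series_rel k) (series_rel k)",
            OF linear_bil_op_left linear_bil_op_right _ ser.IH])
  next
    case (par F R)
    have wf_R: "wf_bgraph k R" using Q_wf[OF assms(1)] par.hyps(2) by (auto simp: Q_def)
    have "(\<lambda>v. bil_op k G H parallel_rel parallel_rel v (hom_vec G H R)) ` hom_vec G H ` P_depth k D \<subseteq> ?S"
      using par.hyps(2) by (auto simp: hom_vec_parallel[OF wf_D wf_R assms(2,3), symmetric]
          intro!: next_depth P_depth_Suc_closed)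
    then show ?case
      unfolding hom_vec_parallel[OF wf_P[OF par.hyps(1)] wf_R assms(2,3)]
      by (rule fun_space.linear_image_span_subset[OF linear_bil_op_left _ par.IH])
  next
    case (perm F \<sigma>)
    have \<sigma>: "\<forall>i<2 * k. \<sigma> i < 2 * k" using Ck_group_less[OF assms(1) perm.hyps(2)] .
    have "lin_op k G H (perm_rel k \<sigma>) (perm_rel k \<sigma>) ` hom_vec G H ` P_depth k D \<subseteq> ?S"
      using perm.hyps(2) by (auto simp: hom_vec_perm_labels[OF wf_D assms(2,3) \<sigma>, symmetric]
          intro!: next_depth P_depth_Suc_closed)
    then show ?case
      unfolding hom_vec_perm_labels[OF wf_P[OF perm.hyps(1)] assms(2,3) \<sigma>]
      by (rule fun_space.linear_image_span_subset[OF linear_lin_op _ perm.IH])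
  qed
qed

lemma hom_eq_on_P_if_eq_on_stable_depth:
  assumes "k \<ge> 1" "finite (gverts G)" "finite (gverts H)"
    and "fun_space.span (hom_vec G H ` P_depth k (Suc D)) = fun_space.span (hom_vec G H ` P_depth k D)"
    and agree: "\<forall>F\<in>P_depth k D. hom (ug F) G = hom (ug F) H"
    and "F \<in> P k"
  shows "hom (ug F) G = hom (ug F) H"
proof -
  note hom_diff_vec = hom_diff_hom_vec[OF _ assms(2,3)]
  have "hom_diff k G H v = 0" if "v \<in> hom_vec G H ` P_depth k D" for v
    using that agree by (auto simp: hom_diff_vec[OF wf_bgraph_P_depth[OF assms(1)]])
  then have "hom_diff k G H (hom_vec G H F) = 0"
    by (rule hom_diff_vanishes_on_span[OF _ hom_vec_in_stable_span[OF assms(1-4,6)]])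
  then show ?thesis
    unfolding hom_diff_vec[OF P_wf[OF assms(1,6)]] by simp
qed

lemma card_P_depth_le_fk:
  assumes "k \<ge> 1" "D \<le> 2 * n ^ (2 * k)" "F \<in> P_depth k D"
  shows "card (bverts F) \<le> fk k n"
proof -
  have "card (bverts F) \<le> 2 * k * 2 ^ D"
    by (rule card_P_depth_le[OF assms(1,3)])
  also have "\<dots> \<le> 2 * k * 2 ^ (2 * n ^ (2 * k))"
    using assms(2) by (intro mult_left_mono power_increasing) simp_all
  also have "\<dots> = fk k n"
    by (simp add: fk_def power_mult)
  finally show ?thesis .
qed

theorem theorem5p5:
  fixes k n :: nat and G :: "'a sgraph" and H :: "'b sgraph"
  assumes "k \<ge> 1"
    and "simple_graph G" and "simple_graph H"
    and "card (gverts G) \<le> n" and "card (gverts H) \<le> n"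
  shows "(\<forall>F\<in>P k. hom (ug F) G = hom (ug F) H) \<longleftrightarrow>
         (\<forall>F\<in>P k. card (gverts (ug F)) \<le> fk k n \<longrightarrow> hom (ug F) G = hom (ug F) H)"
proof
  assume "\<forall>F\<in>P k. hom (ug F) G = hom (ug F) H"
  then show "\<forall>F\<in>P k. card (gverts (ug F)) \<le> fk k n \<longrightarrow> hom (ug F) G = hom (ug F) H"
    by blast
next
  assume small: "\<forall>F\<in>P k. card (gverts (ug F)) \<le> fk k n \<longrightarrow> hom (ug F) G = hom (ug F) H"
  have fin: "finite (gverts G)" "finite (gverts H)"
    using assms(2,3) by (simp_all add: simple_graph_def)
  obtain D where D: "D \<le> 2 * n ^ (2 * k)"
    "fun_space.span (hom_vec G H ` P_depth k (Suc D)) = fun_space.span (hom_vec G H ` P_depth k D)"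
    using exists_stable_depth[OF assms(1) fin assms(4,5)] by blast
  have "\<forall>F\<in>P_depth k D. hom (ug F) G = hom (ug F) H"
    using small card_P_depth_le_fk[OF assms(1) D(1)] P_depth_subset_P by (force simp: ug_def)
  then show "\<forall>F\<in>P k. hom (ug F) G = hom (ug F) H"
    using hom_eq_on_P_if_eq_on_stable_depth[OF assms(1) fin D(2)] by blast
qed

end
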